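(* The zero-error capacity of the $(w,d)$ sliding-window erasure channel with input alphabet of size $q$ satisfies $C_0\ge 1-\frac{1}{w}\log_q V^w_d(q)$.
   Context: $V^n_r(q)=\sum_{i=0}^{r}\binom{n}{i}(q-1)^i$. Integers $w\ge1$, $0\le d\le w$, $q\ge2$, $|\mathcal{X}|=q$. The $(w,d)$ sliding-window erasure channel: a noise word $v(0:n-1)\in\{0,1\}^n$ is admissible if for some initial pattern $v(-w:-1)\in\{0,1\}^w$ every $w$ consecutive entries of $(v(-w),\dots,v(n-1))$ contain at most $d$ ones; output $y(t)=x(t)$ if $v(t)=0$ and $y(t)=*$ (a symbol not in $\mathcal{X}$) if $v(t)=1$. A zero-error code of length $n$ is a set $\mathcal{F}\subseteq\mathcal{X}^n$ such that no output word can be produced by two distinct codewords under admissible noise; $C_0=\sup_n\sup_{\mathcal{F}}\log_q|\mathcal{F}|/n$. *)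

theory Defs
  imports Complex_Main
begin

definition hamming_vol :: "nat \<Rightarrow> nat \<Rightarrow> nat \<Rightarrow> nat" where
  "hamming_vol n r q = (\<Sum>i=0..r. (n choose i) * (q - 1) ^ i)"

text \<open>Noise word v (as a bool list of length n; True = erasure) is admissible for the
  (w,d) sliding-window erasure channel: there is an initial pattern u of length w such
  that every w consecutive entries of u @ v contain at most d ones.\<close>
definition sw_admissible :: "nat \<Rightarrow> nat \<Rightarrow> bool list \<Rightarrow> bool" where
  "sw_admissible w d v \<longleftrightarrow>
     (\<exists>u. length u = w \<and>
        (\<forall>j. j + w \<le> length (u @ v) \<longrightarrow>
             card {t. j \<le> t \<and> t < j + w \<and> (u @ v) ! t} \<le> d))"

text \<open>Channel output: None plays the role of the erasure symbol *.\<close>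
definition sw_output :: "'a list \<Rightarrow> bool list \<Rightarrow> 'a option list" where
  "sw_output x v = map (\<lambda>(a, e). if e then None else Some a) (zip x v)"

definition sw_zero_error_code :: "nat \<Rightarrow> nat \<Rightarrow> nat \<Rightarrow> 'a list set \<Rightarrow> bool" where
  "sw_zero_error_code w d n F \<longleftrightarrow>
     (\<forall>x\<in>F. length x = n) \<and>
     (\<forall>x1\<in>F. \<forall>x2\<in>F. x1 \<noteq> x2 \<longrightarrow>
        \<not> (\<exists>v1 v2. length v1 = n \<and> length v2 = n \<and> sw_admissible w d v1 \<and> sw_admissible w d v2
              \<and> sw_output x1 v1 = sw_output x2 v2))"

definition sw_C0 :: "nat \<Rightarrow> nat \<Rightarrow> 'a::finite itself \<Rightarrow> real" where
  "sw_C0 w d _ = Sup {log (real (card (UNIV :: 'a set))) (real (card F)) / real n | n F.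
       n \<ge> 1 \<and> F \<noteq> {} \<and> sw_zero_error_code w d n (F :: 'a list set)}"

end

theory Submission
  imports Defs "HOL-Library.Cardinality"
begin

text \<open>
  A code of length \<open>w\<close> whose codewords are pairwise at Hamming distance more than \<open>d\<close>
  is zero-error for the channel: a noise word of length \<open>w\<close> lies in a single window, so it
  erases at most \<open>d\<close> positions, and two codewords producing the same output agree outside
  the erasures. A maximal such code has its radius-\<open>d\<close> balls covering all \<open>q\<^sup>w\<close> words
  (Gilbert--Varshamov), so it has at least \<open>q\<^sup>w / V\<^sup>w\<^sub>d(q)\<close> codewords, which gives the
  rate \<open>1 - log\<^sub>q V\<^sup>w\<^sub>d(q) / w\<close>.
\<close>

lemma finite_lists_of_length: "finite {xs :: 'a::finite list. length xs = n}"
  using finite_lists_length_eq[of "UNIV :: 'a set" n] by simp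

lemma card_lists_of_length: "card {xs :: 'a::finite list. length xs = n} = CARD('a) ^ n"
  using card_lists_length_eq[of "UNIV :: 'a set" n] by simp

fun hdist :: "'a list \<Rightarrow> 'a list \<Rightarrow> nat" where
  "hdist (a # xs) (b # ys) = (if a = b then 0 else 1) + hdist xs ys"
| "hdist _ _ = 0"

lemma hdist_sym: "hdist x y = hdist y x"
  by (induction x y rule: hdist.induct) auto

lemma hdist_self: "hdist x x = 0"
  by (induction x) auto

lemma hdist_eq_0_iff: "length x = length y \<Longrightarrow> hdist x y = 0 \<longleftrightarrow> x = y"
  by (induction x y rule: hdist.induct) (auto simp: hdist_self)

definition hball :: "'a list \<Rightarrow> nat \<Rightarrow> 'a list set" where
  "hball x r = {y. length y = length x \<and> hdist x y \<le> r}"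

lemma hball_0: "hball x 0 = {x}"
  by (auto simp: hball_def hdist_eq_0_iff hdist_self)

lemma hball_Cons_Suc_subset:
  "hball (a # xs) (Suc r) \<subseteq>
     Cons a ` hball xs (Suc r) \<union> (\<lambda>(b, ys). b # ys) ` ((UNIV - {a}) \<times> hball xs r)"
proof
  fix y assume "y \<in> hball (a # xs) (Suc r)"
  then obtain b ys where y: "y = b # ys" and "length ys = length xs"
    and "(if a = b then 0 else 1) + hdist xs ys \<le> Suc r"
    unfolding hball_def by (cases y) auto
  then show "y \<in> Cons a ` hball xs (Suc r) \<union> (\<lambda>(b, ys). b # ys) ` ((UNIV - {a}) \<times> hball xs r)"
    by (cases "a = b") (force simp: hball_def)+
qed

lemma finite_hball: "finite (hball (x :: 'a::finite list) r)"
  by (rule finite_subset[OF _ finite_lists_of_length]) (auto simp: hball_def)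

lemma hamming_vol_pos: "hamming_vol n r q \<ge> 1"
proof -
  have "(n choose 0) * (q - 1) ^ 0 \<le> (\<Sum>i=0..r. (n choose i) * (q - 1) ^ i)"
    by (rule member_le_sum) auto
  then show ?thesis by (simp add: hamming_vol_def)
qed

text \<open>Pascal's rule, split according to whether the first coordinate is changed.\<close>
lemma hamming_vol_Suc_Suc:
  "hamming_vol (Suc n) (Suc r) q = hamming_vol n (Suc r) q + (q - 1) * hamming_vol n r q"
proof -
  define c where "c = q - 1"
  have "hamming_vol (Suc n) (Suc r) q = 1 + (\<Sum>i\<le>r. (Suc n choose Suc i) * c ^ Suc i)"
    by (simp add: hamming_vol_def c_def atLeast0AtMost sum.atMost_Suc_shift del: sum.atMost_Suc)
  also have "\<dots> = (1 + (\<Sum>i\<le>r. (n choose Suc i) * c ^ Suc i)) + (\<Sum>i\<le>r. (n choose i) * c ^ Suc i)"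
    by (simp add: sum.distrib algebra_simps)
  also have "1 + (\<Sum>i\<le>r. (n choose Suc i) * c ^ Suc i) = hamming_vol n (Suc r) q"
    by (simp add: hamming_vol_def c_def atLeast0AtMost sum.atMost_Suc_shift del: sum.atMost_Suc)
  also have "(\<Sum>i\<le>r. (n choose i) * c ^ Suc i) = c * hamming_vol n r q"
    by (simp add: hamming_vol_def c_def atLeast0AtMost sum_distrib_left algebra_simps)
  finally show ?thesis by (simp add: c_def)
qed

lemma card_hball_le:
  "card (hball (x :: 'a::finite list) r) \<le> hamming_vol (length x) r CARD('a)"
proof (induction x arbitrary: r)
  case Nil
  show ?case using hamming_vol_pos[of 0 r] by (simp add: hball_def)
next
  case (Cons a xs)
  show ?case
  proof (cases r)
    case 0
    then show ?thesis using hamming_vol_pos by (simp add: hball_0)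
  next
    case (Suc r')
    let ?A = "Cons a ` hball xs (Suc r')"
    let ?B = "(\<lambda>(b, ys). b # ys) ` ((UNIV - {a}) \<times> hball xs r')"
    have "card (hball (a # xs) r) \<le> card (?A \<union> ?B)"
      using hball_Cons_Suc_subset[of a xs r'] Suc by (intro card_mono) (auto simp: finite_hball)
    also have "\<dots> \<le> card ?A + card ?B"
      by (rule card_Un_le)
    also have "\<dots> \<le> card (hball xs (Suc r')) + (CARD('a) - 1) * card (hball xs r')"
      by (intro add_mono card_image_le order.trans[OF card_image_le])
        (auto simp: finite_hball card_cartesian_product)
    also have "\<dots> \<le> hamming_vol (length xs) (Suc r') CARD('a)
                     + (CARD('a) - 1) * hamming_vol (length xs) r' CARD('a)"
      using Cons.IH by (intro add_mono mult_le_mono2)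
    finally show ?thesis
      using Suc by (simp add: hamming_vol_Suc_Suc)
  qed
qed

lemma exists_independent_dominating_subset:
  assumes "finite U" and "symp R" and "\<And>x. x \<in> U \<Longrightarrow> R x x"
  shows "\<exists>F\<subseteq>U. (\<forall>x\<in>F. \<forall>y\<in>F. x \<noteq> y \<longrightarrow> \<not> R x y) \<and> (\<forall>y\<in>U. \<exists>x\<in>F. R x y)"
  using assms(1,3)
proof (induction "card U" arbitrary: U rule: less_induct)
  case less
  show ?case
  proof (cases "U = {}")
    case False
    then obtain x where x: "x \<in> U" by auto
    let ?U' = "{y \<in> U. \<not> R x y}"
    have "card ?U' < card U"
      using x less.prems by (intro psubset_card_mono) auto
    then have "\<exists>F'\<subseteq>?U'. (\<forall>x\<in>F'. \<forall>y\<in>F'. x \<noteq> y \<longrightarrow> \<not> R x y) \<and> (\<forall>y\<in>?U'. \<exists>x\<in>F'. R x y)"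
      using less by (intro less.hyps) auto
    then obtain F' where F': "F' \<subseteq> ?U'" "\<forall>x\<in>F'. \<forall>y\<in>F'. x \<noteq> y \<longrightarrow> \<not> R x y"
      "\<forall>y\<in>?U'. \<exists>x\<in>F'. R x y"
      by blast
    have "\<forall>y\<in>F'. \<not> R x y \<and> \<not> R y x"
      using F'(1) assms(2) by (auto dest: sympD)
    then show ?thesis
      using x F' by (intro exI[of _ "insert x F'"]) blast
  qed simp
qed

text \<open>Gilbert--Varshamov: the radius-\<open>d\<close> balls around a maximal code cover all words.\<close>
lemma gilbert_varshamov:
  "\<exists>F :: 'a::finite list set. (\<forall>x\<in>F. length x = n) \<and> (\<forall>x\<in>F. \<forall>y\<in>F. x \<noteq> y \<longrightarrow> d < hdist x y)
     \<and> CARD('a) ^ n \<le> card F * hamming_vol n d CARD('a)"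
proof -
  define U where "U = {xs :: 'a list. length xs = n}"
  have "finite U"
    unfolding U_def by (rule finite_lists_of_length)
  moreover have "symp (\<lambda>x y. hdist x y \<le> d)"
    by (rule sympI) (simp add: hdist_sym)
  ultimately have "\<exists>F\<subseteq>U. (\<forall>x\<in>F. \<forall>y\<in>F. x \<noteq> y \<longrightarrow> \<not> hdist x y \<le> d)
                      \<and> (\<forall>y\<in>U. \<exists>x\<in>F. hdist x y \<le> d)"
    by (rule exists_independent_dominating_subset) (simp add: hdist_self)
  then obtain F where F: "F \<subseteq> U" "\<forall>x\<in>F. \<forall>y\<in>F. x \<noteq> y \<longrightarrow> \<not> hdist x y \<le> d"
    "\<forall>y\<in>U. \<exists>x\<in>F. hdist x y \<le> d"
    by blast
  have "finite F"
    using F(1) \<open>finite U\<close> by (rule finite_subset)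
  have "CARD('a) ^ n = card U"
    unfolding U_def by (rule card_lists_of_length[symmetric])
  also have "\<dots> \<le> card (\<Union>x\<in>F. hball x d)"
  proof (rule card_mono)
    show "finite (\<Union>x\<in>F. hball x d)"
      using \<open>finite F\<close> by (simp add: finite_hball)
    show "U \<subseteq> (\<Union>x\<in>F. hball x d)"
    proof
      fix y assume "y \<in> U"
      then obtain x where "x \<in> F" "hdist x y \<le> d"
        using F(3) by blast
      moreover have "length y = length x"
        using F(1) \<open>x \<in> F\<close> \<open>y \<in> U\<close> by (auto simp: U_def)
      ultimately show "y \<in> (\<Union>x\<in>F. hball x d)"
        by (auto simp: hball_def)
    qed
  qed
  also have "\<dots> \<le> (\<Sum>x\<in>F. card (hball x d))"
    by (rule card_UN_le[OF \<open>finite F\<close>])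
  also have "\<dots> \<le> (\<Sum>x\<in>F. hamming_vol n d CARD('a))"
    using F(1) card_hball_le by (intro sum_mono) (fastforce simp: U_def)
  finally show ?thesis
    using F(1,2) by (intro exI[of _ F]) (auto simp: U_def not_le)
qed

lemma hdist_le_erasures_if_sw_output_eq:
  "length x1 = length v1 \<Longrightarrow> length x2 = length v2 \<Longrightarrow> length x1 = length x2 \<Longrightarrow>
   sw_output x1 v1 = sw_output x2 v2 \<Longrightarrow> hdist x1 x2 \<le> length (filter id v1)"
proof (induction x1 arbitrary: x2 v1 v2)
  case (Cons a x1)
  then obtain b x2' e1 v1' e2 v2' where eqs: "x2 = b # x2'" "v1 = e1 # v1'" "v2 = e2 # v2'"
    by (metis length_Suc_conv)
  then have outputs_eq: "sw_output x1 v1' = sw_output x2' v2'" and "e1 = e2" "\<not> e1 \<Longrightarrow> a = b"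
    using Cons.prems by (auto simp: sw_output_def split: if_splits)
  moreover have "hdist x1 x2' \<le> length (filter id v1')"
    using Cons.IH[OF _ _ _ outputs_eq] Cons.prems eqs by (simp add: id_def)
  ultimately show ?case
    using eqs by (auto simp: id_def)
qed simp

text \<open>A noise word no longer than the window fits, together with a suffix of the initial
  pattern, into the last window.\<close>
lemma sw_admissible_erasures_le:
  assumes "sw_admissible w d v" and "length v \<le> w"
  shows "length (filter id v) \<le> d"
proof -
  obtain u where u: "length u = w"
    "\<forall>j. j + w \<le> length (u @ v) \<longrightarrow> card {t. j \<le> t \<and> t < j + w \<and> (u @ v) ! t} \<le> d"
    using assms(1) unfolding sw_admissible_def by blast
  have "length (filter id v) = card ((+) w ` {i. i < length v \<and> v ! i})"
    by (simp add: length_filter_conv_card card_image)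
  also have "\<dots> \<le> card {t. length v \<le> t \<and> t < length v + w \<and> (u @ v) ! t}"
    using u(1) assms(2) by (intro card_mono) (auto simp: nth_append)
  also have "\<dots> \<le> d"
    using u by simp
  finally show ?thesis .
qed

lemma sw_zero_error_code_if_min_dist_gt:
  assumes "n \<le> w" and "\<forall>x\<in>F. length x = n" and "\<forall>x\<in>F. \<forall>y\<in>F. x \<noteq> y \<longrightarrow> d < hdist x y"
  shows "sw_zero_error_code w d n F"
  unfolding sw_zero_error_code_def
proof (intro conjI ballI impI notI)
  fix x1 x2 assume x: "x1 \<in> F" "x2 \<in> F" "x1 \<noteq> x2"
    and "\<exists>v1 v2. length v1 = n \<and> length v2 = n \<and> sw_admissible w d v1 \<and> sw_admissible w d v2
           \<and> sw_output x1 v1 = sw_output x2 v2"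
  then obtain v1 v2 where v: "length v1 = n" "length v2 = n" "sw_admissible w d v1"
    "sw_output x1 v1 = sw_output x2 v2" by blast
  have "hdist x1 x2 \<le> length (filter id v1)"
    using v x assms(2) by (intro hdist_le_erasures_if_sw_output_eq) auto
  also have "\<dots> \<le> d"
    using v assms(1) by (intro sw_admissible_erasures_le) auto
  finally show False
    using assms(3) x by force
qed (use assms(2) in blast)

lemma sw_zero_error_code_subset_lists_of_length:
  "sw_zero_error_code w d n F \<Longrightarrow> F \<subseteq> {xs. length xs = n}"
  unfolding sw_zero_error_code_def by blast

lemma finite_sw_zero_error_code:
  "sw_zero_error_code w d n (F :: 'a::finite list set) \<Longrightarrow> finite F"
  using sw_zero_error_code_subset_lists_of_length finite_lists_of_length by (rule finite_subset)

lemma card_sw_zero_error_code_le: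
  "sw_zero_error_code w d n (F :: 'a::finite list set) \<Longrightarrow> card F \<le> CARD('a) ^ n"
  using card_mono[OF finite_lists_of_length sw_zero_error_code_subset_lists_of_length]
  by (simp add: card_lists_of_length)

lemma sw_C0_ge_rate:
  assumes "CARD('a) \<ge> 2" and "n \<ge> 1" and "F \<noteq> {}" and "sw_zero_error_code w d n (F :: 'a::finite list set)"
  shows "log CARD('a) (card F) / n \<le> sw_C0 w d TYPE('a)"
  unfolding sw_C0_def
proof (rule cSup_upper)
  show "bdd_above {log CARD('a) (card G) / n | n G.
          n \<ge> 1 \<and> G \<noteq> {} \<and> sw_zero_error_code w d n (G :: 'a list set)}"
  proof (rule bdd_aboveI[of _ 1])
    fix s assume "s \<in> {log CARD('a) (card G) / n | n G.
          n \<ge> 1 \<and> G \<noteq> {} \<and> sw_zero_error_code w d n (G :: 'a list set)}"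
    then obtain m and G :: "'a list set" where s: "s = log CARD('a) (card G) / m"
      and G: "m \<ge> 1" "G \<noteq> {}" "sw_zero_error_code w d m G"
      by blast
    then have "0 < card G"
      using finite_sw_zero_error_code by (auto simp: card_gt_0_iff)
    then have "log CARD('a) (card G) \<le> log CARD('a) (CARD('a) ^ m)"
      using assms(1) card_sw_zero_error_code_le[OF G(3)] by (subst log_le_cancel_iff) simp_all
    then show "s \<le> 1"
      using assms(1) G(1) by (simp add: s log_nat_power)
  qed
qed (use assms in blast)

lemma diff_log_le_log_of_pow_le_mult:
  fixes b x y :: real
  assumes "1 < b" and "0 < x" and "0 < y" and "b ^ n \<le> x * y"
  shows "n - log b y \<le> log b x"
proof -
  have "n = log b (b ^ n)"
    using assms(1) by (simp add: log_nat_power)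
  also have "\<dots> \<le> log b (x * y)"
    using assms by (subst log_le_cancel_iff) simp_all
  also have "\<dots> = log b x + log b y"
    using assms by (simp add: log_mult)
  finally show ?thesis
    by simp
qed

theorem theorem5:
  fixes w d :: nat
  assumes "w \<ge> 1" and "d \<le> w" and "card (UNIV :: 'a::finite set) \<ge> 2"
  shows "1 - (1 / real w) * log (real (card (UNIV :: 'a set))) (real (hamming_vol w d (card (UNIV :: 'a set))))
           \<le> sw_C0 w d TYPE('a)"
proof -
  define q where "q = CARD('a)"
  define V where "V = hamming_vol w d q"
  obtain F :: "'a list set" where F: "\<forall>x\<in>F. length x = w" "\<forall>x\<in>F. \<forall>y\<in>F. x \<noteq> y \<longrightarrow> d < hdist x y"
    and bound: "q ^ w \<le> card F * V"
    using gilbert_varshamov[of w d] unfolding q_def V_def by (elim exE conjE)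
  have "0 < q ^ w" "0 < V"
    using assms(3) hamming_vol_pos[of w d q] by (simp_all add: q_def V_def)
  then have "0 < card F"
    using bound by (auto intro!: gr0I)
  have "real q ^ w \<le> real (card F) * real V"
    using bound by (simp flip: of_nat_power of_nat_mult)
  then have rate: "real w - log q V \<le> log q (card F)"
    using assms(3) \<open>0 < card F\<close> \<open>0 < V\<close> by (intro diff_log_le_log_of_pow_le_mult) (simp_all add: q_def)
  have "1 - (1 / real w) * log q V = (real w - log q V) / w"
    using assms(1) by (simp add: diff_divide_distrib)
  also have "\<dots> \<le> log q (card F) / w"
    using rate by (simp add: divide_right_mono)
  also have "\<dots> \<le> sw_C0 w d TYPE('a)"
    unfolding q_def using \<open>0 < card F\<close> assms F
    by (intro sw_C0_ge_rate sw_zero_error_code_if_min_dist_gt) auto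
  finally show ?thesis
    unfolding q_def V_def .
qed

end
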